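(* Let $\mathfrak{A}$ be a $(k,p,q)$-differential subalgebra of some $C^*$-algebra, fix $\tau$ with $1>\tau>\log_k(\max\{k-1,p\})$, and let $f\in\mathfrak{D}_\tau$ satisfy $f(0)=0$ and $f(1)=1$. Suppose $(b_\alpha)_\alpha\subseteq\mathfrak{A}$ is a self-adjoint bounded (two-sided) approximate identity of $\mathfrak{A}$. Then $\lim_\alpha\|f(b_\alpha)a-a\|_{\mathfrak{A}}=0$ for all $a\in\mathfrak{A}$.
   Context: A $(k,p,q)$-differential subalgebra of a $C^*$-algebra $\mathfrak{B}$ (with norm $\|\cdot\|_{\mathfrak{B}}$) is a $*$-subalgebra $\mathfrak{A}\subseteq\mathfrak{B}$ equipped with its own norm $\|\cdot\|_{\mathfrak{A}}$ making it a Banach $*$-algebra on which the involution is continuous, where $k\in\mathbb{Z}$, $k\geq 2$, and $p,q>0$ are reals with $p+q=k$, such that for some constant $C>0$, $\|a^k\|_{\mathfrak{A}}\leq C\|a\|_{\mathfrak{A}}^p\|a\|_{\mathfrak{B}}^q$ for all $a\in\mathfrak{A}$. The Fourier transform is $\widehat{f}(t)=\int_{\mathbb{R}}f(x)e^{-itx}dx$. For $\tau\in(0,1)$, $\mathfrak{D}_\tau$ is the Banach algebra of functions $f(x)=\frac{1}{2\pi}\int_{\mathbb{R}}\widehat{f}(t)e^{itx}dt$ with $\widehat f\in L^1(\mathbb{R})$ and $\int_{\mathbb{R}}|\widehat{f}(t)|e^{|t|^\tau}dt<\infty$; for $b=b^*\in\mathfrak{A}$ and $f\in\mathfrak{D}_\tau$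 with $f(0)=0$, $f(b)=\frac{1}{2\pi}\int_{\mathbb{R}}\widehat{f}(t)e^{itb}dt\in\mathfrak{A}$ (a Bochner integral in the unitization of $\mathfrak{A}$). *)

theory Defs
  imports "HOL-Analysis.Analysis"
begin

text \<open>A complex algebra structure on a real normed algebra, given by an explicit
  complex scalar multiplication compatible with the real one.\<close>
definition cplx_alg :: "(complex \<Rightarrow> 'a::real_normed_algebra \<Rightarrow> 'a) \<Rightarrow> bool" where
  "cplx_alg sc \<longleftrightarrow>
     (\<forall>r x. sc (complex_of_real r) x = scaleR r x) \<and>
     (\<forall>z w x. sc (z * w) x = sc z (sc w x)) \<and>
     (\<forall>z w x. sc (z + w) x = sc z x + sc w x) \<and>
     (\<forall>z x y. sc z (x + y) = sc z x + sc z y) \<and>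
     (\<forall>z x y. sc z (x * y) = sc z x * y) \<and>
     (\<forall>z x y. sc z (x * y) = x * sc z y) \<and>
     (\<forall>z x. norm (sc z x) = cmod z * norm x)"

definition involution :: "(complex \<Rightarrow> 'a::real_normed_algebra \<Rightarrow> 'a) \<Rightarrow> ('a \<Rightarrow> 'a) \<Rightarrow> bool" where
  "involution sc st \<longleftrightarrow>
     (\<forall>x. st (st x) = x) \<and>
     (\<forall>x y. st (x + y) = st x + st y) \<and>
     (\<forall>z x. st (sc z x) = sc (cnj z) (st x)) \<and>
     (\<forall>x y. st (x * y) = st y * st x)"

text \<open>Banach *-algebra with continuous involution (the norm is the type's norm,
  completeness comes from the class banach, submultiplicativity from real_normed_algebra).\<close>
definition banach_star_algebra ::
  "(complex \<Rightarrow> 'a::{banach,real_normed_algebra} \<Rightarrow> 'a) \<Rightarrow> ('a \<Rightarrow> 'a) \<Rightarrow> bool" where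
  "banach_star_algebra sc st \<longleftrightarrow> cplx_alg sc \<and> involution sc st \<and> continuous_on UNIV st"

definition C_star_algebra ::
  "(complex \<Rightarrow> 'b::{banach,real_normed_algebra} \<Rightarrow> 'b) \<Rightarrow> ('b \<Rightarrow> 'b) \<Rightarrow> bool" where
  "C_star_algebra sc st \<longleftrightarrow> banach_star_algebra sc st \<and> (\<forall>x. norm (st x * x) = norm x ^ 2)"

text \<open>The *-subalgebra A of B is represented by an injective *-homomorphism \<iota> : A \<rightarrow> B
  (identifying A with its image); \<open>norm (\<iota> a)\<close> is the B-norm of a.\<close>
definition star_embedding ::
  "(complex \<Rightarrow> 'a::real_normed_algebra \<Rightarrow> 'a) \<Rightarrow> ('a \<Rightarrow> 'a) \<Rightarrow>
   (complex \<Rightarrow> 'b::real_normed_algebra \<Rightarrow> 'b) \<Rightarrow> ('b \<Rightarrow> 'b) \<Rightarrow> ('a \<Rightarrow> 'b) \<Rightarrow> bool" where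
  "star_embedding scA stA scB stB \<iota> \<longleftrightarrow>
     inj \<iota> \<and>
     (\<forall>x y. \<iota> (x + y) = \<iota> x + \<iota> y) \<and>
     (\<forall>z x. \<iota> (scA z x) = scB z (\<iota> x)) \<and>
     (\<forall>x y. \<iota> (x * y) = \<iota> x * \<iota> y) \<and>
     (\<forall>x. \<iota> (stA x) = stB (\<iota> x))"

text \<open>Positive powers in a possibly non-unital algebra: \<open>pw a n = a^(n+1)\<close>.\<close>
primrec pw :: "'a::times \<Rightarrow> nat \<Rightarrow> 'a" where
  "pw a 0 = a"
| "pw a (Suc n) = pw a n * a"

definition kpq_differential_subalgebra ::
  "nat \<Rightarrow> real \<Rightarrow> real \<Rightarrow>
   (complex \<Rightarrow> 'a::{banach,real_normed_algebra} \<Rightarrow> 'a) \<Rightarrow> ('a \<Rightarrow> 'a) \<Rightarrow>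
   (complex \<Rightarrow> 'b::{banach,real_normed_algebra} \<Rightarrow> 'b) \<Rightarrow> ('b \<Rightarrow> 'b) \<Rightarrow> ('a \<Rightarrow> 'b) \<Rightarrow> bool" where
  "kpq_differential_subalgebra k p q scA stA scB stB \<iota> \<longleftrightarrow>
     k \<ge> 2 \<and> p > 0 \<and> q > 0 \<and> p + q = real k \<and>
     C_star_algebra scB stB \<and> banach_star_algebra scA stA \<and>
     star_embedding scA stA scB stB \<iota> \<and>
     (\<exists>C>0. \<forall>a. norm (pw a (k - 1)) \<le> C * norm a powr p * norm (\<iota> a) powr q)"

text \<open>\<open>g\<close> plays the role of the Fourier transform \<open>f^\<close>; \<open>inv_fourier g\<close> is f.\<close>
definition inv_fourier :: "(real \<Rightarrow> complex) \<Rightarrow> real \<Rightarrow> complex" where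
  "inv_fourier g x = (1 / (2 * pi)) * (LINT t|lborel. g t * exp (\<i> * complex_of_real t * complex_of_real x))"

definition D_tau :: "real \<Rightarrow> (real \<Rightarrow> complex) \<Rightarrow> bool" where
  "D_tau \<tau> g \<longleftrightarrow> integrable lborel g \<and>
     integrable lborel (\<lambda>t. cmod (g t) * exp (\<bar>t\<bar> powr \<tau>))"

definition expm1_A :: "(complex \<Rightarrow> 'a::{banach,real_normed_algebra} \<Rightarrow> 'a) \<Rightarrow> complex \<Rightarrow> 'a \<Rightarrow> 'a" where
  "expm1_A sc z b = (\<Sum>n. scaleR (1 / fact (Suc n)) (pw (sc z b) n))"

text \<open>\<open>f(b) = 1/(2\<pi>) \<integral> f^(t) e^(itb) dt\<close>; since \<open>\<integral> f^ = 2\<pi> f(0) = 0\<close>, the unit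
  part of \<open>e^(itb)\<close> contributes nothing, so \<open>f(b) = 1/(2\<pi>) \<integral> f^(t) (e^(itb) - 1) dt\<close>.\<close>
definition fcalc :: "(complex \<Rightarrow> 'a::{banach,real_normed_algebra} \<Rightarrow> 'a) \<Rightarrow> (real \<Rightarrow> complex) \<Rightarrow> 'a \<Rightarrow> 'a" where
  "fcalc sc g b = scaleR (1 / (2 * pi))
     (integral UNIV (\<lambda>t::real. sc (g t) (expm1_A sc (\<i> * complex_of_real t) b)))"

definition directed :: "('i \<Rightarrow> 'i \<Rightarrow> bool) \<Rightarrow> bool" where
  "directed le \<longleftrightarrow> (\<forall>x. le x x) \<and> (\<forall>x y z. le x y \<longrightarrow> le y z \<longrightarrow> le x z) \<and>
     (\<forall>x y. \<exists>z. le x z \<and> le y z)"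

definition net_lim :: "('i \<Rightarrow> 'i \<Rightarrow> bool) \<Rightarrow> ('i \<Rightarrow> real) \<Rightarrow> real \<Rightarrow> bool" where
  "net_lim le h L \<longleftrightarrow> (\<forall>\<epsilon>>0. \<exists>\<alpha>0. \<forall>\<alpha>. le \<alpha>0 \<alpha> \<longrightarrow> \<bar>h \<alpha> - L\<bar> < \<epsilon>)"

definition bounded_approx_identity ::
  "('i \<Rightarrow> 'i \<Rightarrow> bool) \<Rightarrow> ('i \<Rightarrow> 'a::real_normed_algebra) \<Rightarrow> bool" where
  "bounded_approx_identity le b \<longleftrightarrow> directed le \<and> (\<exists>M. \<forall>\<alpha>. norm (b \<alpha>) \<le> M) \<and>
     (\<forall>a. net_lim le (\<lambda>\<alpha>. norm (b \<alpha> * a - a)) 0 \<and> net_lim le (\<lambda>\<alpha>. norm (a * b \<alpha> - a)) 0)"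

end

(*
  Write w(t) = e^(itb) - 1, an element of the non-unital algebra A. For self-adjoint b the element
  1 + w(t) is unitary in the unitization of B, so the B-norm of w(t) is at most 2. Since
  1 + w(kt) = (1 + w(t))^k, the (k,p,q)-inequality applied to the top binomial term w(t)^k gives
  |w(kt)| <= D * max(1, |w(t)|)^r with r = max(k - 1, p); iterating this scaling recursion yields
  |w(t)| <= K * exp(|t|^tau) uniformly in bounded self-adjoint b, precisely because log_k r < tau.
  Hence g(t) w(t) is integrable, and as the integral of g(t) (e^(it) - 1) is
  2 pi (f(1) - f(0)) = 2 pi, we get 2 pi (f(b) a - a) = integral of g(t) (w(t) a - (e^(it) - 1) a).
  This integrand is at most |g(t)| min(|t| e^(|t| M) |b a - a|, (K exp(|t|^tau) + 2) |a|), so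
  dominated convergence gives f(b_alpha) a -> a as b_alpha a -> a.
*)

theory Submission
  imports Defs
begin

section \<open>Unitization\<close>

text \<open>Adjoining a unit with the norm \<open>\<bar>r\<bar> + norm x\<close> lets the non-unital algebra reuse \<open>exp\<close>
  and \<open>exp_add_commuting\<close> of class \<open>real_normed_algebra_1\<close>.\<close>

typedef 'a unitization = "UNIV :: (real \<times> 'a) set"
  morphisms rep_unitization Abs_unitization by auto

setup_lifting type_definition_unitization

instantiation unitization :: (real_normed_algebra) "{zero,one,plus,minus,uminus,scaleR,times,norm}"
begin
lift_definition zero_unitization :: "'a unitization" is "(0, 0)" .
lift_definition one_unitization :: "'a unitization" is "(1, 0)" .
lift_definition plus_unitization :: "'a unitization \<Rightarrow> 'a unitization \<Rightarrow> 'a unitization"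
  is "\<lambda>(r, x) (s, y). (r + s, x + y)" .
lift_definition minus_unitization :: "'a unitization \<Rightarrow> 'a unitization \<Rightarrow> 'a unitization"
  is "\<lambda>(r, x) (s, y). (r - s, x - y)" .
lift_definition uminus_unitization :: "'a unitization \<Rightarrow> 'a unitization" is "\<lambda>(r, x). (- r, - x)" .
lift_definition scaleR_unitization :: "real \<Rightarrow> 'a unitization \<Rightarrow> 'a unitization"
  is "\<lambda>c (r, x). (c * r, c *\<^sub>R x)" .
lift_definition times_unitization :: "'a unitization \<Rightarrow> 'a unitization \<Rightarrow> 'a unitization"
  is "\<lambda>(r, x) (s, y). (r * s, r *\<^sub>R y + s *\<^sub>R x + x * y)" .
lift_definition norm_unitization :: "'a unitization \<Rightarrow> real" is "\<lambda>(r, x). \<bar>r\<bar> + norm x" .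
instance ..
end

lemma norm_unitization_mult_le:
  fixes x y :: "'a::real_normed_algebra"
  shows "\<bar>r * s\<bar> + norm (r *\<^sub>R y + s *\<^sub>R x + x * y) \<le> (\<bar>r\<bar> + norm x) * (\<bar>s\<bar> + norm y)"
proof -
  have "norm (r *\<^sub>R y + s *\<^sub>R x + x * y) \<le> \<bar>r\<bar> * norm y + \<bar>s\<bar> * norm x + norm x * norm y"
    using norm_triangle_ineq[of "r *\<^sub>R y + s *\<^sub>R x" "x * y"] norm_triangle_ineq[of "r *\<^sub>R y" "s *\<^sub>R x"]
      norm_mult_ineq[of x y] by simp
  then show ?thesis
    by (simp add: abs_mult algebra_simps)
qed

instantiation unitization :: (real_normed_algebra) real_normed_algebra_1
begin
definition sgn_unitization :: "'a unitization \<Rightarrow> 'a unitization"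
  where "sgn_unitization x = x /\<^sub>R norm x"
definition dist_unitization :: "'a unitization \<Rightarrow> 'a unitization \<Rightarrow> real"
  where "dist_unitization x y = norm (x - y)"
definition uniformity_unitization :: "('a unitization \<times> 'a unitization) filter"
  where "uniformity_unitization = (INF e\<in>{0<..}. principal {(x, y). dist x y < e})"
definition open_unitization :: "'a unitization set \<Rightarrow> bool"
  where "open_unitization U = (\<forall>x\<in>U. eventually (\<lambda>(x', y). x' = x \<longrightarrow> y \<in> U) uniformity)"
instance
proof
  fix a b c :: "'a unitization" and r s :: real and U :: "'a unitization set"
  show "a + b + c = a + (b + c)" "a + b = b + a" "0 + a = a" "- a + a = 0" "a - b = a + - b"
    by (transfer; auto)+
  show "r *\<^sub>R (a + b) = r *\<^sub>R a + r *\<^sub>R b" "(r + s) *\<^sub>R a = r *\<^sub>R a + s *\<^sub>R a"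
    "r *\<^sub>R s *\<^sub>R a = (r * s) *\<^sub>R a" "1 *\<^sub>R a = a"
    "a * b * c = a * (b * c)" "(a + b) * c = a * c + b * c" "a * (b + c) = a * b + a * c"
    "r *\<^sub>R a * b = r *\<^sub>R (a * b)" "a * r *\<^sub>R b = r *\<^sub>R (a * b)"
    "1 * a = a" "a * 1 = a" "(0 :: 'a unitization) \<noteq> 1" "norm (1 :: 'a unitization) = 1"
    by (transfer; auto simp: algebra_simps)+
  show "sgn a = a /\<^sub>R norm a" "dist a b = norm (a - b)"
    "uniformity = (INF e\<in>{0<..}. principal {(x, y :: 'a unitization). dist x y < e})"
    "open U = (\<forall>x\<in>U. eventually (\<lambda>(x', y). x' = x \<longrightarrow> y \<in> U) uniformity)"
    by (simp_all add: sgn_unitization_def dist_unitization_def uniformity_unitization_def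
        open_unitization_def)
  show "(norm a = 0) = (a = 0)"
    by transfer (auto simp: add_nonneg_eq_0_iff)
  show "norm (a + b) \<le> norm a + norm b"
    by transfer (clarsimp intro!: add_mono[OF abs_triangle_ineq norm_triangle_ineq, THEN order_trans])
  show "norm (r *\<^sub>R a) = \<bar>r\<bar> * norm a"
    by transfer (auto simp: abs_mult algebra_simps)
  show "norm (a * b) \<le> norm a * norm b"
    by transfer (auto split: prod.splits intro: norm_unitization_mult_le)
qed
end

lift_definition scalar_part :: "'a::real_normed_algebra unitization \<Rightarrow> real" is fst .
lift_definition ideal_part :: "'a::real_normed_algebra unitization \<Rightarrow> 'a" is snd .
lift_definition of_ideal :: "'a::real_normed_algebra \<Rightarrow> 'a unitization" is "\<lambda>x. (0, x)" .

lemma unitization_decompose: "x = scalar_part x *\<^sub>R 1 + of_ideal (ideal_part x)"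
  by transfer auto

lemma bounded_linear_scalar_part: "bounded_linear scalar_part"
  by (rule bounded_linear_intro[where K = 1]; transfer; auto)

lemma bounded_linear_ideal_part: "bounded_linear ideal_part"
  by (rule bounded_linear_intro[where K = 1]; transfer; auto)

lemma bounded_linear_of_ideal: "bounded_linear of_ideal"
  by (rule bounded_linear_intro[where K = 1]; transfer; auto)

lemma of_ideal_inject [simp]: "of_ideal x = of_ideal y \<longleftrightarrow> x = y"
  by transfer auto

lemma of_ideal_add: "of_ideal (x + y) = of_ideal x + of_ideal y"
  by transfer auto

lemma of_ideal_mult: "of_ideal (x * y) = of_ideal x * of_ideal y"
  by transfer auto

lemma of_ideal_scaleR: "of_ideal (r *\<^sub>R x) = r *\<^sub>R of_ideal x"
  by transfer auto

lemma one_plus_of_ideal_mult: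
  "(1 + of_ideal x) * (1 + of_ideal y) = 1 + of_ideal (x + y + x * y)"
  by transfer auto

instance unitization :: ("{banach,real_normed_algebra}") banach
proof
  fix X :: "nat \<Rightarrow> 'a unitization"
  assume "Cauchy X"
  then obtain r x where "(\<lambda>n. scalar_part (X n)) \<longlonglongrightarrow> r" "(\<lambda>n. ideal_part (X n)) \<longlonglongrightarrow> x"
    using bounded_linear.Cauchy[OF bounded_linear_scalar_part] 
      bounded_linear.Cauchy[OF bounded_linear_ideal_part] by (metis Cauchy_convergent_iff convergent_def)
  then have "(\<lambda>n. scalar_part (X n) *\<^sub>R 1 + of_ideal (ideal_part (X n))) \<longlonglongrightarrow> r *\<^sub>R 1 + of_ideal x"
    by (intro tendsto_intros bounded_linear.tendsto[OF bounded_linear_of_ideal])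
  then have "X \<longlonglongrightarrow> r *\<^sub>R 1 + of_ideal x"
    by (subst (asm) unitization_decompose[symmetric])
  then show "convergent X"
    by (auto simp: convergent_def)
qed

section \<open>Powers and the exponential series without a unit\<close>

lemma pw_commute: "x * pw x n = pw x n * (x :: 'a::semigroup_mult)"
  by (induction n) (auto simp: mult.assoc[symmetric])

lemma norm_pw_le: "norm (pw (x :: 'a::real_normed_algebra) n) \<le> norm x ^ Suc n"
proof (induction n)
  case (Suc n)
  have "norm (pw x (Suc n)) \<le> norm (pw x n) * norm x"
    by (simp add: norm_mult_ineq)
  also have "\<dots> \<le> norm x ^ Suc n * norm x"
    using Suc by (simp add: mult_right_mono)
  finally show ?case
    by (simp add: mult.commute)
qed simp

lemma of_ideal_power: "of_ideal x ^ Suc n = of_ideal (pw x n)"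
proof (induction n)
  case (Suc n)
  have "of_ideal x ^ Suc (Suc n) = of_ideal x ^ Suc n * of_ideal x"
    by (rule power_Suc2)
  also have "\<dots> = of_ideal (pw x (Suc n))"
    unfolding Suc by (simp add: of_ideal_mult)
  finally show ?case .
qed simp

lemma norm_pw_mult_minus_le:
  fixes a b :: "'a::real_normed_algebra"
  shows "norm (pw b n * a - a) \<le> real (Suc n) * max 1 (norm b) ^ n * norm (b * a - a)"
proof (induction n)
  case (Suc n)
  let ?M = "max 1 (norm b)" and ?d = "norm (b * a - a)"
  have "pw b (Suc n) * a - a = pw b n * (b * a - a) + (pw b n * a - a)"
    by (simp add: mult.assoc algebra_simps)
  then have "norm (pw b (Suc n) * a - a) \<le> norm (pw b n * (b * a - a)) + norm (pw b n * a - a)"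
    by (simp only: norm_triangle_ineq)
  also have "\<dots> \<le> norm (pw b n) * ?d + norm (pw b n * a - a)"
    by (simp add: norm_mult_ineq)
  also have "\<dots> \<le> ?M ^ Suc n * ?d + real (Suc n) * ?M ^ Suc n * ?d"
  proof (rule add_mono)
    have "norm (pw b n) \<le> ?M ^ Suc n"
      by (rule order_trans[OF norm_pw_le power_mono]) auto
    then show "norm (pw b n) * ?d \<le> ?M ^ Suc n * ?d"
      by (rule mult_right_mono) simp
    have "?M ^ n \<le> ?M ^ Suc n"
      by (rule power_increasing) auto
    then show "norm (pw b n * a - a) \<le> real (Suc n) * ?M ^ Suc n * ?d"
      by (intro order_trans[OF Suc] mult_right_mono mult_left_mono) auto
  qed
  also have "\<dots> = real (Suc (Suc n)) * ?M ^ Suc n * ?d"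
    by (simp add: algebra_simps)
  finally show ?case .
qed simp

lemma exp_minus_one_sums:
  fixes z :: "'a::{real_normed_field,banach}"
  shows "(\<lambda>n. z ^ Suc n / fact (Suc n)) sums (exp z - 1)"
  using sums_Suc_iff[of "\<lambda>n. z ^ n /\<^sub>R fact n"] exp_converges[of z]
  by (simp add: scaleR_conv_of_real divide_inverse mult.commute)

definition expm1 :: "'a::{banach,real_normed_algebra} \<Rightarrow> 'a" where
  "expm1 x = (\<Sum>n. (1 / fact (Suc n)) *\<^sub>R pw x n)"

lemma expm1_A_eq_expm1: "expm1_A sc z b = expm1 (sc z b)"
  by (simp add: expm1_A_def expm1_def)

lemma summable_norm_expm1_series:
  "summable (\<lambda>n. norm ((1 / fact (Suc n)) *\<^sub>R pw (x :: 'a::{banach,real_normed_algebra}) n))"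
proof (rule summable_comparison_test[OF _ sums_summable[OF exp_minus_one_sums[of "norm x"]]])
  show "\<exists>N. \<forall>n\<ge>N. norm (norm ((1 / fact (Suc n)) *\<^sub>R pw x n)) \<le> norm x ^ Suc n / fact (Suc n)"
    using norm_pw_le[of x] by (auto intro!: divide_right_mono simp: divide_inverse mult.commute simp del: fact_Suc)
qed

lemma expm1_sums: "(\<lambda>n. (1 / fact (Suc n)) *\<^sub>R pw x n) sums expm1 x"
  unfolding expm1_def by (rule summable_sums[OF summable_norm_cancel[OF summable_norm_expm1_series]])

lemma norm_expm1_le: "norm (expm1 (x :: 'a::{banach,real_normed_algebra})) \<le> exp (norm x) - 1"
proof -
  have "norm (expm1 x) \<le> (\<Sum>n. norm ((1 / fact (Suc n)) *\<^sub>R pw x n))"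
    unfolding expm1_def by (rule summable_norm[OF summable_norm_expm1_series])
  also have "\<dots> \<le> (\<Sum>n. norm x ^ Suc n / fact (Suc n))"
    using norm_pw_le[of x]
    by (intro suminf_le summable_norm_expm1_series sums_summable[OF exp_minus_one_sums])
      (auto intro!: divide_right_mono simp: divide_inverse mult.commute simp del: fact_Suc)
  also have "\<dots> = exp (norm x) - 1"
    using exp_minus_one_sums sums_unique by metis
  finally show ?thesis .
qed

lemma exp_of_ideal: "exp (of_ideal x) = 1 + of_ideal (expm1 (x :: 'a::{banach,real_normed_algebra}))"
proof -
  have "(\<lambda>n. of_ideal x ^ Suc n /\<^sub>R fact (Suc n)) sums (exp (of_ideal x) - 1)"
    using sums_Suc_iff[of "\<lambda>n. of_ideal x ^ n /\<^sub>R fact n"] exp_converges[of "of_ideal x"] by simp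
  moreover have "(\<lambda>n. of_ideal ((1 / fact (Suc n)) *\<^sub>R pw x n)) sums of_ideal (expm1 x)"
    by (rule bounded_linear.sums[OF bounded_linear_of_ideal expm1_sums])
  ultimately have "exp (of_ideal x) - 1 = of_ideal (expm1 x)"
    by (simp add: of_ideal_scaleR of_ideal_power divide_inverse_commute sums_unique2
        del: fact_Suc power_Suc)
  then show ?thesis
    by (simp add: diff_eq_eq)
qed

lemma expm1_add_commuting:
  fixes x y :: "'a::{banach,real_normed_algebra}"
  assumes "x * y = y * x"
  shows "expm1 (x + y) = expm1 x + expm1 y + expm1 x * expm1 y"
proof -
  have "exp (of_ideal x + of_ideal y) = exp (of_ideal x) * exp (of_ideal y)"
    using assms by (intro exp_add_commuting) (simp add: of_ideal_mult[symmetric])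
  then show ?thesis
    by (simp add: exp_of_ideal one_plus_of_ideal_mult of_ideal_add[symmetric])
qed

lemma expm1_zero [simp]: "expm1 (0 :: 'a::{banach,real_normed_algebra}) = 0"
proof -
  have "pw (0 :: 'a) n = 0" for n
    by (induction n) auto
  then show ?thesis
    by (simp add: expm1_def)
qed

section \<open>Scaling recursions\<close>

lemma mult_powr_le_powr_add_const:
  fixes a b c :: real
  assumes "0 < a" "a < b" "0 < c"
  obtains K where "\<And>x. 0 \<le> x \<Longrightarrow> c * x powr a \<le> x powr b + K"
proof
  define x0 where "x0 = c powr (1 / (b - a))"
  have "0 < x0" "x0 powr (b - a) = c"
    using assms by (simp_all add: x0_def powr_powr)
  fix x :: real
  assume "0 \<le> x"
  show "c * x powr a \<le> x powr b + c * x0 powr a"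
  proof (cases "x0 \<le> x")
    case True
    then have "c \<le> x powr (b - a)"
      using powr_mono2[of "b - a" x0 x] \<open>0 < x0\<close> \<open>x0 powr (b - a) = c\<close> assms by simp
    then have "c * x powr a \<le> x powr (b - a) * x powr a"
      by (simp add: mult_right_mono)
    also have "\<dots> = x powr b"
      using True \<open>0 < x0\<close> by (simp add: powr_add[symmetric])
    finally show ?thesis
      using assms \<open>0 < x0\<close> by (smt (verit) mult_pos_pos powr_gt_zero)
  next
    case False
    then have "c * x powr a \<le> c * x0 powr a"
      using \<open>0 \<le> x\<close> assms by (intro mult_left_mono powr_mono2) auto
    then show ?thesis
      by (smt (verit) powr_ge_zero)
  qed
qed

lemma scaling_recursion_geometric_bound:
  fixes L :: "real \<Rightarrow> real"
  assumes "0 < k" "0 \<le> r" "r < \<rho>" "1 \<le> \<rho>" "0 \<le> E" "M \<le> E" "c \<le> E * (\<rho> - r)"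
    and base: "\<And>s. \<bar>s\<bar> \<le> 1 \<Longrightarrow> L s \<le> M"
    and step: "\<And>s. L (k * s) \<le> c + r * L s"
  shows "\<bar>t\<bar> \<le> k ^ m \<Longrightarrow> L t \<le> E * \<rho> ^ m"
proof (induction m arbitrary: t)
  case 0
  then show ?case
    using base assms by force
next
  case (Suc m)
  then have "L (t / k) \<le> E * \<rho> ^ m"
    using \<open>0 < k\<close> by (simp add: field_simps abs_div)
  moreover have "E * (\<rho> - r) * 1 \<le> E * (\<rho> - r) * \<rho> ^ m"
    using assms by (intro mult_left_mono one_le_power) auto
  moreover have "L t \<le> c + r * L (t / k)"
    using step[of "t / k"] \<open>0 < k\<close> by simp
  ultimately have "L t \<le> E * (\<rho> - r) * \<rho> ^ m + r * (E * \<rho> ^ m)"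
    using assms by (smt (verit) mult_left_mono)
  then show ?case
    by (simp add: algebra_simps)
qed

lemma power_cover:
  fixes k x :: real
  assumes "1 < k" "1 \<le> x"
  obtains m :: nat where "x \<le> k ^ m" "k ^ m \<le> k * x"
proof
  define m where "m = nat \<lceil>log k x\<rceil>"
  have "0 \<le> log k x"
    using assms by simp
  then have m: "log k x \<le> real m" "real m \<le> log k x + 1"
    unfolding m_def by linarith+
  show "x \<le> k ^ m"
    using powr_mono[OF m(1), of k] assms by (simp add: powr_realpow)
  show "k ^ m \<le> k * x"
    using powr_mono[OF m(2), of k] assms by (simp add: powr_realpow powr_add mult.commute)
qed

lemma scaling_recursion_power_bound:
  fixes L :: "real \<Rightarrow> real"
  assumes "1 < k" "0 \<le> \<sigma>" "0 \<le> r" "r < k powr \<sigma>" "0 \<le> E" "M \<le> E" "c \<le> E * (k powr \<sigma> - r)"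
    and base: "\<And>s. \<bar>s\<bar> \<le> 1 \<Longrightarrow> L s \<le> M"
    and step: "\<And>s. L (k * s) \<le> c + r * L s"
  shows "L t \<le> E * k powr \<sigma> * max 1 \<bar>t\<bar> powr \<sigma>"
proof (cases "\<bar>t\<bar> \<le> 1")
  case True
  have "1 \<le> k powr \<sigma>"
    using assms by (intro ge_one_powr_ge_zero) auto
  then show ?thesis
    using base[OF True] True assms by (simp add: max_absorb1) (smt (verit) mult_le_cancel_left1)
next
  case False
  obtain m where m: "\<bar>t\<bar> \<le> k ^ m" "k ^ m \<le> k * \<bar>t\<bar>"
    using power_cover[OF \<open>1 < k\<close>, of "\<bar>t\<bar>"] False by auto
  have "L t \<le> E * (k powr \<sigma>) ^ m"
    using scaling_recursion_geometric_bound[where L = L and \<rho> = "k powr \<sigma>" and E = E,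
        OF _ _ _ _ _ _ _ base step m(1)] assms
    by (simp add: ge_one_powr_ge_zero)
  also have "(k powr \<sigma>) ^ m = (k ^ m) powr \<sigma>"
    using assms by (simp add: powr_powr powr_realpow[symmetric] mult.commute)
  also have "\<dots> \<le> (k * \<bar>t\<bar>) powr \<sigma>"
    using m \<open>0 \<le> \<sigma>\<close> by (intro powr_mono2) auto
  also have "\<dots> = k powr \<sigma> * max 1 \<bar>t\<bar> powr \<sigma>"
    using False assms by (simp add: powr_mult max_absorb2)
  finally show ?thesis
    using \<open>0 \<le> E\<close> by (simp add: mult_left_mono mult.assoc)
qed

text \<open>Iterating \<open>L (k s) \<le> c + r L s\<close> about \<open>log k \<bar>t\<bar>\<close> times from \<open>\<bar>s\<bar> \<le> 1\<close> gives growth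
  \<open>\<bar>t\<bar> powr \<sigma>\<close> for any \<open>\<sigma>\<close> with \<open>r < k powr \<sigma>\<close>, and such \<open>\<sigma> < \<tau>\<close> exist since \<open>log k r < \<tau>\<close>.\<close>
lemma scaling_recursion_powr_bound:
  fixes k r \<tau> M c :: real
  assumes "1 < k" "1 \<le> r" "log k r < \<tau>"
  obtains K where
    "\<And>L t. (\<And>s. \<bar>s\<bar> \<le> 1 \<Longrightarrow> L s \<le> M) \<Longrightarrow> (\<And>s. L (k * s) \<le> c + r * L s) \<Longrightarrow> L t \<le> K + \<bar>t\<bar> powr \<tau>"
proof -
  define \<sigma> where "\<sigma> = (log k r + \<tau>) / 2"
  have "0 \<le> log k r"
    using assms by simp
  then have "0 < \<sigma>" and "\<sigma> < \<tau>" and "log k r < \<sigma>"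
    using assms(3) unfolding \<sigma>_def by auto
  have "r < k powr \<sigma>"
    using powr_less_mono[OF \<open>log k r < \<sigma>\<close>, of k] assms by simp
  define E where "E = max M (max 0 (c / (k powr \<sigma> - r)))"
  have "c \<le> max 0 (c / (k powr \<sigma> - r)) * (k powr \<sigma> - r)"
    using \<open>r < k powr \<sigma>\<close> by (cases "0 \<le> c") (simp_all add: max_def)
  also have "\<dots> \<le> E * (k powr \<sigma> - r)"
    using \<open>r < k powr \<sigma>\<close> by (intro mult_right_mono) (simp_all add: E_def)
  finally have "c \<le> E * (k powr \<sigma> - r)" .
  obtain K1 where K1: "\<And>x. 0 \<le> x \<Longrightarrow> (E * k powr \<sigma> + 1) * x powr \<sigma> \<le> x powr \<tau> + K1"
    using mult_powr_le_powr_add_const[OF \<open>0 < \<sigma>\<close> \<open>\<sigma> < \<tau>\<close>, of "E * k powr \<sigma> + 1"]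
    by (smt (verit) E_def max.cobounded2 max.coboundedI2 mult_nonneg_nonneg powr_ge_zero)
  show ?thesis
  proof (rule that)
    fix L :: "real \<Rightarrow> real" and t :: real
    assume base: "\<And>s. \<bar>s\<bar> \<le> 1 \<Longrightarrow> L s \<le> M" and step: "\<And>s. L (k * s) \<le> c + r * L s"
    have "L t \<le> E * k powr \<sigma> * max 1 \<bar>t\<bar> powr \<sigma>"
      using assms \<open>0 < \<sigma>\<close> \<open>r < k powr \<sigma>\<close> \<open>c \<le> E * (k powr \<sigma> - r)\<close>
      by (intro scaling_recursion_power_bound[where L = L and E = E and \<sigma> = \<sigma>,
          OF _ _ _ _ _ _ _ base step]) (auto simp: E_def)
    also have "\<dots> \<le> (E * k powr \<sigma> + 1) * max 1 \<bar>t\<bar> powr \<sigma>"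
      by (simp add: distrib_right)
    also have "\<dots> \<le> max 1 \<bar>t\<bar> powr \<tau> + K1"
      by (rule K1) simp
    also have "\<dots> \<le> (1 + K1) + \<bar>t\<bar> powr \<tau>"
      by (simp add: max_def)
    finally show "L t \<le> (1 + K1) + \<bar>t\<bar> powr \<tau>" .
  qed
qed

section \<open>Banach *-algebras and the elements \<open>e\<^sup>i\<^sup>t\<^sup>b - 1\<close>\<close>

locale banach_star =
  fixes sc :: "complex \<Rightarrow> 'a::{banach,real_normed_algebra} \<Rightarrow> 'a" and st :: "'a \<Rightarrow> 'a"
  assumes banach_star_algebra: "banach_star_algebra sc st"
begin

lemma sc_of_real: "sc (complex_of_real r) x = r *\<^sub>R x"
  and sc_mult_scalars: "sc (z * w) x = sc z (sc w x)"
  and sc_add_scalars: "sc (z + w) x = sc z x + sc w x"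
  and sc_add: "sc z (x + y) = sc z x + sc z y"
  and sc_mult_left: "sc z (x * y) = sc z x * y"
  and sc_mult_right: "sc z (x * y) = x * sc z y"
  and norm_sc: "norm (sc z x) = cmod z * norm x"
  using banach_star_algebra unfolding banach_star_algebra_def cplx_alg_def by blast+

lemma st_add: "st (x + y) = st x + st y"
  and st_sc: "st (sc z x) = sc (cnj z) (st x)"
  and st_mult: "st (x * y) = st y * st x"
  and continuous_st: "continuous_on UNIV st"
  using banach_star_algebra unfolding banach_star_algebra_def involution_def by blast+

lemma sc_commute_scalars: "sc z (sc w x) = sc w (sc z x)"
  by (metis sc_mult_scalars mult.commute)

lemma sc_scaleR: "sc z (r *\<^sub>R x) = r *\<^sub>R sc z x"
  using sc_commute_scalars[of z "complex_of_real r" x] by (simp add: sc_of_real)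

lemma bounded_linear_sc: "bounded_linear (sc z)"
  by (rule bounded_linear_intro[where K = "cmod z"]) (simp_all add: sc_add sc_scaleR norm_sc)

lemma bounded_linear_sc_scalar: "bounded_linear (\<lambda>z. sc z a)"
  by (rule bounded_linear_intro[where K = "norm a"])
    (simp_all add: sc_add_scalars scaleR_conv_of_real sc_mult_scalars sc_of_real norm_sc)

lemma sc_diff: "sc z (x - y) = sc z x - sc z y"
  by (rule linear_diff[OF bounded_linear.linear[OF bounded_linear_sc]])

lemma sc_sum: "sc z (sum f S) = (\<Sum>i\<in>S. sc z (f i))"
  by (rule linear_sum[OF bounded_linear.linear[OF bounded_linear_sc]])

lemma sc_pw: "pw (sc z x) n = sc (z ^ Suc n) (pw x n)"
  by (induction n)
    (simp_all add: sc_mult_left[symmetric] sc_mult_right[symmetric] sc_mult_scalars[symmetric]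
      power_Suc2 mult_ac del: power_Suc)

lemma sc_mult_sc_commute: "sc z x * sc w x = sc w x * sc z x"
  by (simp add: sc_mult_left[symmetric] sc_mult_right[symmetric] sc_commute_scalars)

lemma linear_st: "linear st"
  using st_sc[of "complex_of_real r" for r] by (intro linearI) (simp_all add: st_add sc_of_real)

lemma st_suminf:
  assumes "summable f"
  shows "st (suminf f) = (\<Sum>n. st (f n))"
proof -
  have "(\<lambda>N. st (\<Sum>n<N. f n)) \<longlonglongrightarrow> st (suminf f)"
    using continuous_st assms by (intro continuous_on_tendsto_compose[of UNIV st]) (auto simp: summable_LIMSEQ)
  then show ?thesis
    by (simp add: linear_sum[OF linear_st] sums_def[symmetric] sums_iff)
qed

lemma st_pw: "st (pw x n) = pw (st x) n"
  by (induction n) (simp_all add: st_mult pw_commute)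

lemma st_expm1: "st (expm1 x) = expm1 (st x)"
  unfolding expm1_def
  by (subst st_suminf[OF summable_norm_cancel[OF summable_norm_expm1_series]])
    (simp add: linear_cmul[OF linear_st] st_pw)

definition expm1_it :: "'a \<Rightarrow> real \<Rightarrow> 'a" where
  "expm1_it b t = expm1 (sc (\<i> * complex_of_real t) b)"

lemma expm1_it_add: "expm1_it b (s + t) = expm1_it b s + expm1_it b t + expm1_it b s * expm1_it b t"
  unfolding expm1_it_def
  by (simp add: distrib_left sc_add_scalars expm1_add_commuting sc_mult_sc_commute)

lemma expm1_it_0 [simp]: "expm1_it b 0 = 0"
  by (simp add: expm1_it_def sc_of_real[of 0, simplified])

lemma st_expm1_it: "st b = b \<Longrightarrow> st (expm1_it b t) = expm1_it b (- t)"
  by (simp add: expm1_it_def st_expm1 st_sc)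

lemma expm1_it_uminus_mult: "expm1_it b (- t) * expm1_it b t = - (expm1_it b (- t) + expm1_it b t)"
  using expm1_it_add[of b "- t" t] by (simp add: eq_neg_iff_add_eq_0 algebra_simps)

lemma norm_expm1_it_le: "norm (expm1_it b t) \<le> exp (\<bar>t\<bar> * norm b) - 1"
  using norm_expm1_le[of "sc (\<i> * complex_of_real t) b"] by (simp add: expm1_it_def norm_sc norm_mult)

lemma ln_max_norm_expm1_it_le:
  assumes "\<bar>t\<bar> \<le> 1" "norm b \<le> M"
  shows "ln (max 1 (norm (expm1_it b t))) \<le> M"
proof -
  have "\<bar>t\<bar> * norm b \<le> M"
    using assms by (smt (verit) mult_left_le_one_le norm_ge_zero abs_ge_zero)
  then have "max 1 (norm (expm1_it b t)) \<le> exp M"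
    using norm_expm1_it_le[of b t] by (smt (verit) exp_mono exp_ge_zero one_le_exp_iff norm_ge_zero)
  then show ?thesis
    by (metis ln_exp ln_le_cancel_iff exp_gt_zero max.strict_coboundedI1 zero_less_one)
qed

lemma norm_expm1_it_Suc_mult_minus_pw_le:
  "norm (expm1_it b (real (Suc n) * t) - pw (expm1_it b t) n)
     \<le> (1 + norm (expm1_it b t)) ^ Suc n - 1 - norm (expm1_it b t) ^ Suc n"
proof (induction n)
  case (Suc n)
  let ?w = "expm1_it b t" and ?W = "expm1_it b (real (Suc n) * t)" and ?P = "pw (expm1_it b t) n"
  let ?x = "norm ?w"
  have "expm1_it b (real (Suc (Suc n)) * t) = ?W + ?w + ?W * ?w"
    using expm1_it_add[of b "real (Suc n) * t" t] by (simp add: algebra_simps)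
  then have "expm1_it b (real (Suc (Suc n)) * t) - pw ?w (Suc n) = (?W - ?P) + (?W - ?P) * ?w + ?w + ?P"
    by (simp add: algebra_simps)
  also have "norm \<dots> \<le> norm (?W - ?P) * (1 + ?x) + ?x + ?x ^ Suc n"
    using norm_triangle_ineq[of "(?W - ?P) + (?W - ?P) * ?w + ?w" ?P]
      norm_triangle_ineq[of "(?W - ?P) + (?W - ?P) * ?w" ?w] norm_triangle_ineq[of "?W - ?P" "(?W - ?P) * ?w"]
      norm_mult_ineq[of "?W - ?P" ?w] norm_pw_le[of ?w n]
    by (simp add: algebra_simps)
  also have "\<dots> \<le> ((1 + ?x) ^ Suc n - 1 - ?x ^ Suc n) * (1 + ?x) + ?x + ?x ^ Suc n"
    using Suc by (intro add_right_mono mult_right_mono) simp_all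
  also have "\<dots> = (1 + ?x) ^ Suc (Suc n) - 1 - ?x ^ Suc (Suc n)"
    by (simp add: algebra_simps)
  finally show ?case .
qed simp

end

section \<open>Growth of \<open>e\<^sup>i\<^sup>t\<^sup>b - 1\<close> in a differential subalgebra\<close>

lemma power_Suc_diff_le:
  fixes x :: real
  assumes "0 \<le> x"
  shows "(1 + x) ^ Suc n - x ^ Suc n \<le> real (Suc n) * (1 + x) ^ n"
proof (induction n)
  case (Suc n)
  have "(1 + x) ^ Suc (Suc n) - x ^ Suc (Suc n) = (1 + x) * ((1 + x) ^ Suc n - x ^ Suc n) + x ^ Suc n"
    by (simp add: algebra_simps)
  also have "\<dots> \<le> (1 + x) * (real (Suc n) * (1 + x) ^ n) + (1 + x) ^ Suc n"
    using Suc assms by (intro add_mono mult_left_mono power_mono) auto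
  also have "\<dots> = real (Suc (Suc n)) * (1 + x) ^ Suc n"
    by (simp add: algebra_simps)
  finally show ?case .
qed simp

lemma C_star_norm_star:
  assumes "C_star_algebra sc st"
  shows "norm (st y) = norm y"
proof -
  have st_st: "st (st x) = x" and C_star: "norm (st x * x) = norm x ^ 2" for x
    using assms by (simp_all add: C_star_algebra_def banach_star_algebra_def involution_def)
  have le: "norm x \<le> norm (st x)" for x
  proof (cases "x = 0")
    case False
    have "norm x * norm x \<le> norm (st x) * norm x"
      using C_star[of x] norm_mult_ineq[of "st x" x] by (simp add: power2_eq_square)
    then show ?thesis
      using False by simp
  qed simp
  show ?thesis
    using le[of y] le[of "st y"] st_st[of y] by simp
qed

locale differential_subalgebra = banach_star scA stA
  for scA :: "complex \<Rightarrow> 'a::{banach,real_normed_algebra} \<Rightarrow> 'a" and stA +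
  fixes scB :: "complex \<Rightarrow> 'b::{banach,real_normed_algebra} \<Rightarrow> 'b" and stB :: "'b \<Rightarrow> 'b"
    and \<iota> :: "'a \<Rightarrow> 'b" and k :: nat and p q C :: real
  assumes C_star: "C_star_algebra scB stB"
    and star_embedding: "star_embedding scA stA scB stB \<iota>"
    and k_ge_2: "2 \<le> k" and p_nonneg: "0 \<le> p" and q_nonneg: "0 \<le> q" and C_nonneg: "0 \<le> C"
    and differential_ineq: "\<And>a. norm (pw a (k - 1)) \<le> C * norm a powr p * norm (\<iota> a) powr q"
begin

lemma \<iota>_add: "\<iota> (x + y) = \<iota> x + \<iota> y"
  and \<iota>_mult: "\<iota> (x * y) = \<iota> x * \<iota> y"
  and \<iota>_star: "\<iota> (stA x) = stB (\<iota> x)"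
  using star_embedding by (simp_all add: star_embedding_def)

lemma \<iota>_uminus: "\<iota> (- x) = - \<iota> x"
  using \<iota>_add[of x "- x"] \<iota>_add[of 0 0] by (simp add: eq_neg_iff_add_eq_0 add.commute)

lemma norm_\<iota>_expm1_it_le_2:
  assumes "stA b = b"
  shows "norm (\<iota> (expm1_it b t)) \<le> 2"
proof -
  let ?w = "expm1_it b t" and ?w' = "expm1_it b (- t)"
  have "norm (\<iota> ?w) ^ 2 = norm (stB (\<iota> ?w) * \<iota> ?w)"
    using C_star by (simp add: C_star_algebra_def)
  also have "\<dots> = norm (\<iota> (?w' * ?w))"
    by (simp add: \<iota>_mult \<iota>_star[symmetric] st_expm1_it[OF assms])
  also have "\<dots> = norm (\<iota> ?w' + \<iota> ?w)"
    by (simp only: expm1_it_uminus_mult \<iota>_uminus \<iota>_add norm_minus_cancel)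
  also have "\<dots> \<le> 2 * norm (\<iota> ?w)"
    using norm_triangle_ineq[of "\<iota> ?w'" "\<iota> ?w"] C_star_norm_star[OF C_star, of "\<iota> ?w"]
    by (simp add: \<iota>_star[symmetric] st_expm1_it[OF assms])
  finally show ?thesis
    by (cases "\<iota> ?w = 0") (auto simp: power2_eq_square)
qed

lemma norm_expm1_it_scale_le:
  assumes "stA b = b"
  shows "norm (expm1_it b (real k * t))
    \<le> (real k * 2 ^ (k - 1) + C * 2 powr q) * max 1 (norm (expm1_it b t)) powr max (real k - 1) p"
proof -
  let ?x = "norm (expm1_it b t)" and ?r = "max (real k - 1) p"
  define m where "m = max 1 ?x"
  obtain n where k: "k = Suc n"
    using k_ge_2 by (cases k) auto
  have "1 \<le> m" "?x \<le> m"
    by (simp_all add: m_def)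
  have "norm (expm1_it b (real k * t) - pw (expm1_it b t) n) \<le> real k * 2 ^ (k - 1) * m powr ?r"
  proof -
    have "norm (expm1_it b (real k * t) - pw (expm1_it b t) n) \<le> (1 + ?x) ^ Suc n - 1 - ?x ^ Suc n"
      using norm_expm1_it_Suc_mult_minus_pw_le[of b n t] k by simp
    also have "\<dots> \<le> real (Suc n) * (2 * m) ^ n"
      using power_Suc_diff_le[of ?x n] \<open>1 \<le> m\<close> \<open>?x \<le> m\<close>
      by (smt (verit) mult_left_mono power_mono norm_ge_zero of_nat_0_le_iff)
    also have "\<dots> = real k * 2 ^ (k - 1) * m powr real n"
      using \<open>1 \<le> m\<close> k by (simp add: powr_realpow power_mult_distrib)
    also have "\<dots> \<le> real k * 2 ^ (k - 1) * m powr ?r"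
      using \<open>1 \<le> m\<close> k by (intro mult_left_mono powr_mono) auto
    finally show ?thesis .
  qed
  moreover have "norm (pw (expm1_it b t) n) \<le> C * m powr ?r * 2 powr q"
  proof -
    have "norm (pw (expm1_it b t) n) \<le> C * ?x powr p * norm (\<iota> (expm1_it b t)) powr q"
      using differential_ineq[of "expm1_it b t"] k by simp
    also have "\<dots> \<le> C * m powr ?r * 2 powr q"
    proof (intro mult_mono mult_left_mono)
      show "?x powr p \<le> m powr ?r"
        using powr_mono2[OF p_nonneg norm_ge_zero \<open>?x \<le> m\<close>] powr_mono[of p ?r m] \<open>1 \<le> m\<close> by simp
      show "norm (\<iota> (expm1_it b t)) powr q \<le> 2 powr q"
        using norm_\<iota>_expm1_it_le_2[OF assms] q_nonneg by (intro powr_mono2) auto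
    qed (use C_nonneg in auto)
    finally show ?thesis .
  qed
  ultimately show ?thesis
    using norm_triangle_sub[of "expm1_it b (real k * t)" "pw (expm1_it b t) n"]
    by (simp add: m_def algebra_simps)
qed

lemma ln_norm_expm1_it_scale_le:
  assumes "stA b = b"
  shows "ln (max 1 (norm (expm1_it b (real k * t))))
    \<le> ln (real k * 2 ^ (k - 1) + C * 2 powr q) + max (real k - 1) p * ln (max 1 (norm (expm1_it b t)))"
proof -
  let ?r = "max (real k - 1) p" and ?D = "real k * 2 ^ (k - 1) + C * 2 powr q"
  let ?m = "max 1 (norm (expm1_it b t))"
  have "1 * 1 \<le> real k * 2 ^ (k - 1)"
    using k_ge_2 by (intro mult_mono) auto
  then have "1 \<le> ?D"
    using C_nonneg by (smt (verit) mult_nonneg_nonneg powr_ge_zero)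
  moreover have "1 \<le> ?r"
    using k_ge_2 by auto
  ultimately have "1 * 1 \<le> ?D * ?m powr ?r"
    by (intro mult_mono ge_one_powr_ge_zero) auto
  then have "max 1 (norm (expm1_it b (real k * t))) \<le> ?D * ?m powr ?r"
    using norm_expm1_it_scale_le[OF assms, of t] by simp
  then have "ln (max 1 (norm (expm1_it b (real k * t)))) \<le> ln (?D * ?m powr ?r)"
    by (intro ln_mono) auto
  also have "\<dots> = ln ?D + ?r * ln ?m"
    using \<open>1 \<le> ?D\<close> by (simp add: ln_mult ln_powr)
  finally show ?thesis .
qed

lemma norm_expm1_it_subexponential:
  assumes "log (real k) (max (real k - 1) p) < \<tau>"
  obtains K where
    "\<And>b t. stA b = b \<Longrightarrow> norm b \<le> M \<Longrightarrow> norm (expm1_it b t) \<le> K * exp (\<bar>t\<bar> powr \<tau>)"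
proof -
  let ?r = "max (real k - 1) p" and ?D = "real k * 2 ^ (k - 1) + C * 2 powr q"
  have "1 < real k" "1 \<le> ?r"
    using k_ge_2 by auto
  obtain K where K: "\<And>L t. (\<And>s. \<bar>s\<bar> \<le> 1 \<Longrightarrow> L s \<le> M) \<Longrightarrow>
      (\<And>s. L (real k * s) \<le> ln ?D + ?r * L s) \<Longrightarrow> L t \<le> K + \<bar>t\<bar> powr \<tau>"
    by (rule scaling_recursion_powr_bound[OF \<open>1 < real k\<close> \<open>1 \<le> ?r\<close> assms, where M = M and c = "ln ?D"]) blast
  show ?thesis
  proof (rule that[of "exp K"])
    fix b t
    assume "stA b = b" "norm b \<le> M"
    have "ln (max 1 (norm (expm1_it b t))) \<le> K + \<bar>t\<bar> powr \<tau>"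
      using ln_max_norm_expm1_it_le[OF _ \<open>norm b \<le> M\<close>] ln_norm_expm1_it_scale_le[OF \<open>stA b = b\<close>]
      by (rule K)
    then have "max 1 (norm (expm1_it b t)) \<le> exp (K + \<bar>t\<bar> powr \<tau>)"
      by (metis exp_ln exp_le_cancel_iff max.strict_coboundedI1 zero_less_one)
    then show "norm (expm1_it b t) \<le> exp K * exp (\<bar>t\<bar> powr \<tau>)"
      by (simp add: exp_add)
  qed
qed

end

section \<open>Henstock-Kurzweil integrability\<close>

lemma tagged_sums_close_if_weighted_close:
  fixes f \<phi> :: "'n::euclidean_space \<Rightarrow> 'b::real_normed_vector"
  assumes h: "h integrable_on cbox a b" and close: "\<And>x. x \<in> cbox a b \<Longrightarrow> norm (f x - \<phi> x) \<le> c * h x"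
    and "0 \<le> c" and "\<bar>integral (cbox a b) h\<bar> < H"
  obtains \<gamma> where "gauge \<gamma>" and "\<And>\<D>. \<D> tagged_division_of cbox a b \<Longrightarrow> \<gamma> fine \<D> \<Longrightarrow>
      norm ((\<Sum>(x, K)\<in>\<D>. measure lborel K *\<^sub>R f x) - (\<Sum>(x, K)\<in>\<D>. measure lborel K *\<^sub>R \<phi> x)) \<le> c * H"
proof -
  obtain \<gamma> where "gauge \<gamma>" and \<gamma>: "\<And>\<D>. \<D> tagged_division_of cbox a b \<Longrightarrow> \<gamma> fine \<D> \<Longrightarrow>
      norm ((\<Sum>(x, K)\<in>\<D>. measure lborel K *\<^sub>R h x) - integral (cbox a b) h) < H - \<bar>integral (cbox a b) h\<bar>"
    using integrable_integral[OF h] assms(4) unfolding has_integral by (meson diff_gt_0_iff_gt)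
  show ?thesis
  proof (rule that[OF \<open>gauge \<gamma>\<close>])
    fix \<D>
    assume \<D>: "\<D> tagged_division_of cbox a b" "\<gamma> fine \<D>"
    have "norm (measure lborel K *\<^sub>R (f x - \<phi> x)) \<le> c * (measure lborel K * h x)" if "(x, K) \<in> \<D>" for x K
      using mult_left_mono[OF close[OF tag_in_interval[OF \<D>(1) that]] measure_nonneg[of lborel K]]
      by (simp add: mult.left_commute)
    then have "norm (\<Sum>(x, K)\<in>\<D>. measure lborel K *\<^sub>R (f x - \<phi> x)) \<le> c * (\<Sum>(x, K)\<in>\<D>. measure lborel K * h x)"
      by (auto simp: sum_distrib_left intro!: order_trans[OF norm_sum sum_mono])
    also have "\<dots> \<le> c * H"
      using \<gamma>[OF \<D>] \<open>0 \<le> c\<close> by (intro mult_left_mono) auto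
    finally show "norm ((\<Sum>(x, K)\<in>\<D>. measure lborel K *\<^sub>R f x) - (\<Sum>(x, K)\<in>\<D>. measure lborel K *\<^sub>R \<phi> x))
        \<le> c * H"
      by (simp add: sum_subtractf[symmetric] case_prod_unfold scaleR_diff_right)
  qed
qed

lemma integrable_on_cbox_weighted_approx:
  fixes f :: "'n::euclidean_space \<Rightarrow> 'b::banach"
  assumes h: "h integrable_on cbox a b"
    and approx: "\<And>e. 0 < e \<Longrightarrow> \<exists>\<phi>. \<phi> integrable_on cbox a b \<and> (\<forall>x\<in>cbox a b. norm (f x - \<phi> x) \<le> e * h x)"
  shows "f integrable_on cbox a b"
  unfolding integrable_Cauchy
proof (intro allI impI)
  fix e :: real
  assume "0 < e"
  let ?S = "\<lambda>f \<D>. \<Sum>(x, K)\<in>\<D>. measure lborel K *\<^sub>R f x"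
  define H where "H = \<bar>integral (cbox a b) h\<bar> + 1"
  have "0 < H"
    by (simp add: H_def add_nonneg_pos)
  obtain \<phi> where \<phi>: "\<phi> integrable_on cbox a b" "\<And>x. x \<in> cbox a b \<Longrightarrow> norm (f x - \<phi> x) \<le> e / (3 * H) * h x"
    using approx[of "e / (3 * H)"] \<open>0 < e\<close> \<open>0 < H\<close> by auto
  obtain \<gamma>1 where "gauge \<gamma>1" and \<gamma>1: "\<And>\<D>1 \<D>2. \<D>1 tagged_division_of cbox a b \<Longrightarrow> \<gamma>1 fine \<D>1 \<Longrightarrow>
      \<D>2 tagged_division_of cbox a b \<Longrightarrow> \<gamma>1 fine \<D>2 \<Longrightarrow> norm (?S \<phi> \<D>1 - ?S \<phi> \<D>2) < e / 3"
    using \<phi>(1) \<open>0 < e\<close> unfolding integrable_Cauchy by (meson divide_pos_pos zero_less_numeral)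
  obtain \<gamma>2 where "gauge \<gamma>2" and \<gamma>2: "\<And>\<D>. \<D> tagged_division_of cbox a b \<Longrightarrow> \<gamma>2 fine \<D> \<Longrightarrow>
      norm (?S f \<D> - ?S \<phi> \<D>) \<le> e / (3 * H) * H"
    by (rule tagged_sums_close_if_weighted_close[OF h \<phi>(2)]) (use \<open>0 < e\<close> \<open>0 < H\<close> in \<open>auto simp: H_def\<close>)
  have "e / (3 * H) * H = e / 3"
    using \<open>0 < H\<close> by simp
  show "\<exists>\<gamma>. gauge \<gamma> \<and> (\<forall>\<D>1 \<D>2. \<D>1 tagged_division_of cbox a b \<and> \<gamma> fine \<D>1 \<and>
      \<D>2 tagged_division_of cbox a b \<and> \<gamma> fine \<D>2 \<longrightarrow> norm (?S f \<D>1 - ?S f \<D>2) < e)"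
  proof (intro exI conjI allI impI)
    show "gauge (\<lambda>x. \<gamma>1 x \<inter> \<gamma>2 x)"
      using \<open>gauge \<gamma>1\<close> \<open>gauge \<gamma>2\<close> by (rule gauge_Int)
    fix \<D>1 \<D>2
    assume "\<D>1 tagged_division_of cbox a b \<and> (\<lambda>x. \<gamma>1 x \<inter> \<gamma>2 x) fine \<D>1 \<and>
      \<D>2 tagged_division_of cbox a b \<and> (\<lambda>x. \<gamma>1 x \<inter> \<gamma>2 x) fine \<D>2"
    then have D: "\<D>1 tagged_division_of cbox a b" "\<gamma>1 fine \<D>1" "\<gamma>2 fine \<D>1"
      "\<D>2 tagged_division_of cbox a b" "\<gamma>1 fine \<D>2" "\<gamma>2 fine \<D>2"
      by (auto simp: fine_Int)
    let ?A = "?S f \<D>1 - ?S \<phi> \<D>1" and ?B = "?S \<phi> \<D>1 - ?S \<phi> \<D>2" and ?C = "?S f \<D>2 - ?S \<phi> \<D>2"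
    have "norm (?S f \<D>1 - ?S f \<D>2) = norm (?A + ?B - ?C)"
      by (rule arg_cong[where f = norm]) simp
    also have "\<dots> \<le> norm ?A + norm ?B + norm ?C"
      using norm_triangle_ineq4[of "?A + ?B" ?C] norm_triangle_ineq[of ?A ?B] by linarith
    also have "\<dots> < e / 3 + e / 3 + e / 3"
      using \<gamma>2[OF D(1,3)] \<gamma>2[OF D(4,6)] \<gamma>1[OF D(1,2,4,5)] \<open>e / (3 * H) * H = e / 3\<close> by linarith
    finally show "norm (?S f \<D>1 - ?S f \<D>2) < e"
      by simp
  qed
qed

lemma integrable_on_cbox_mult_continuous:
  fixes g c :: "real \<Rightarrow> complex"
  assumes "integrable lborel g" "continuous_on UNIV c"
  shows "(\<lambda>t. g t * c t) integrable_on cbox u v"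
proof -
  have "g absolutely_integrable_on cbox u v"
    using assms(1) by (intro absolutely_integrable_on_subcbox[where S = UNIV])
      (auto simp: set_integrable_def integrable_completion borel_measurable_integrable)
  then have "(\<lambda>t. c t * g t) absolutely_integrable_on cbox u v"
    using assms(2) by (intro absolutely_integrable_bounded_measurable_product[OF bilinear_times]
        continuous_imp_measurable_on_sets_lebesgue compact_imp_bounded compact_continuous_image)
      (auto intro: continuous_on_subset)
  then show ?thesis
    by (simp add: absolutely_integrable_on_def mult.commute)
qed

context banach_star
begin

text \<open>\<open>g\<close> is merely integrable, so the partial sums of the exponential series approximate the
  integrand only relative to the weight \<open>norm \<circ> g\<close>.\<close>
lemma integrable_on_cbox_sc_expm1_it:
  assumes g: "integrable lborel g"
  shows "(\<lambda>t. sc (g t) (expm1_it b t)) integrable_on cbox u v"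
proof (rule integrable_on_cbox_weighted_approx)
  show "(\<lambda>t. norm (g t)) integrable_on cbox u v"
    by (rule integrable_on_subcbox[OF integrable_on_lborel[OF integrable_norm[OF g]]]) simp
  fix e :: real
  assume "0 < e"
  let ?z = "\<lambda>t. \<i> * complex_of_real t"
  let ?term = "\<lambda>i t. (1 / fact (Suc i)) *\<^sub>R pw (sc (?z t) b) i"
  define T where "T = max \<bar>u\<bar> \<bar>v\<bar>"
  have "norm (?term i t) \<le> (T * norm b) ^ Suc i / fact (Suc i)" if "t \<in> cbox u v" for i t
  proof -
    have "norm (?term i t) \<le> norm (sc (?z t) b) ^ Suc i / fact (Suc i)"
      using norm_pw_le[of "sc (?z t) b" i] by (simp add: divide_right_mono del: fact_Suc)
    also have "\<dots> \<le> (T * norm b) ^ Suc i / fact (Suc i)"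
      using that by (intro divide_right_mono power_mono) (auto simp: norm_sc norm_mult T_def mult_right_mono)
    finally show ?thesis .
  qed
  then have "uniform_limit (cbox u v) (\<lambda>n t. \<Sum>i<n. ?term i t) (expm1_it b) sequentially"
    unfolding expm1_it_def expm1_def by (rule Weierstrass_m_test[OF _ sums_summable[OF exp_minus_one_sums]])
  then obtain N where N: "\<And>t. t \<in> cbox u v \<Longrightarrow> norm (expm1_it b t - (\<Sum>i<N. ?term i t)) < e"
    using uniform_limitD[OF _ \<open>0 < e\<close>] by (fastforce simp: eventually_sequentially dist_norm norm_minus_commute)
  have "sc (g t) (?term i t) = sc (g t * (of_real (1 / fact (Suc i)) * ?z t ^ Suc i)) (pw b i)" for i t
    by (simp add: sc_pw sc_of_real[symmetric] sc_mult_scalars[symmetric] mult_ac del: fact_Suc of_real_divide)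
  then have "(\<lambda>t. sc (g t) (\<Sum>i<N. ?term i t))
      = (\<lambda>t. \<Sum>i<N. sc (g t * (of_real (1 / fact (Suc i)) * ?z t ^ Suc i)) (pw b i))"
    by (simp add: sc_sum)
  moreover have "\<dots> integrable_on cbox u v"
    by (intro integrable_sum ballI integrable_linear[OF _ bounded_linear_sc_scalar, unfolded o_def]
        integrable_on_cbox_mult_continuous[OF g] continuous_intros) simp_all
  moreover have "norm (sc (g t) (expm1_it b t) - sc (g t) (\<Sum>i<N. ?term i t)) \<le> e * norm (g t)"
    if "t \<in> cbox u v" for t
    using mult_left_mono[OF less_imp_le[OF N[OF that]], of "norm (g t)"]
    by (simp add: sc_diff[symmetric] norm_sc mult.commute)
  ultimately show "\<exists>\<phi>. \<phi> integrable_on cbox u v \<and>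
      (\<forall>t\<in>cbox u v. norm (sc (g t) (expm1_it b t) - \<phi> t) \<le> e * norm (g t))"
    by (intro exI[of _ "\<lambda>t. sc (g t) (\<Sum>i<N. ?term i t)"]) simp
qed

lemma integrable_on_UNIV_sc_expm1_it:
  assumes "integrable lborel g" "\<And>t. norm (expm1_it b t) \<le> \<omega> t"
    and "integrable lborel (\<lambda>t. cmod (g t) * \<omega> t)"
  shows "(\<lambda>t. sc (g t) (expm1_it b t)) integrable_on UNIV"
proof (rule integrable_on_all_intervals_UNIV)
  show "(\<lambda>t. sc (g t) (expm1_it b t)) integrable_on cbox u v" for u v
    using integrable_on_cbox_sc_expm1_it[OF assms(1)] .
  show "norm (sc (g t) (expm1_it b t)) \<le> cmod (g t) * \<omega> t" for t
    using assms(2)[of t] by (simp add: norm_sc mult_left_mono)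
qed (use integrable_on_lborel[OF assms(3)] in simp)

end

section \<open>Approximate identities\<close>

lemma integrable_min_scaled:
  fixes u v :: "'a \<Rightarrow> real"
  assumes "u \<in> borel_measurable M" "integrable M v" "\<And>x. 0 \<le> u x" "\<And>x. 0 \<le> v x" "0 \<le> \<delta>"
  shows "integrable M (\<lambda>x. min (\<delta> * u x) (v x))"
  by (rule Bochner_Integration.integrable_bound[OF assms(2)]) (use assms in auto)

lemma tendsto_integral_min_scaled:
  fixes u v :: "'a \<Rightarrow> real"
  assumes "u \<in> borel_measurable M" "integrable M v" "\<And>x. 0 \<le> u x" "\<And>x. 0 \<le> v x"
  shows "((\<lambda>\<delta>. LINT x|M. min (\<delta> * u x) (v x)) \<longlongrightarrow> 0) (at_right 0)"
proof (rule tendsto_at_right_sequentially[OF zero_less_one])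
  fix \<delta> :: "nat \<Rightarrow> real"
  assume "\<And>n. 0 < \<delta> n" "\<delta> \<longlonglongrightarrow> 0"
  have "(\<lambda>n. LINT x|M. min (\<delta> n * u x) (v x)) \<longlonglongrightarrow> (LINT x|M. 0)"
  proof (rule integral_dominated_convergence[where w = v])
    show "AE x in M. (\<lambda>n. min (\<delta> n * u x) (v x)) \<longlonglongrightarrow> 0"
    proof (rule AE_I2)
      fix x
      have "(\<lambda>n. min (\<delta> n * u x) (v x)) \<longlonglongrightarrow> min (0 * u x) (v x)"
        by (intro tendsto_intros \<open>\<delta> \<longlonglongrightarrow> 0\<close>)
      then show "(\<lambda>n. min (\<delta> n * u x) (v x)) \<longlonglongrightarrow> 0"
        using assms(4)[of x] by (simp add: min_absorb1)
    qed
    show "AE x in M. norm (min (\<delta> n * u x) (v x)) \<le> v x" for n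
      using assms(3,4) \<open>0 < \<delta> n\<close> by (intro AE_I2) (simp add: abs_of_nonneg)
  qed (use assms in auto)
  then show "(\<lambda>n. LINT x|M. min (\<delta> n * u x) (v x)) \<longlonglongrightarrow> 0"
    by simp
qed

lemma net_lim_zero_by_bound:
  fixes \<phi> :: "real \<Rightarrow> real"
  assumes "net_lim le h 0" "(\<phi> \<longlongrightarrow> 0) (at_right 0)" "\<phi> 0 = 0"
    and "\<And>\<alpha>. 0 \<le> h \<alpha>" "\<And>\<alpha>. \<bar>F \<alpha>\<bar> \<le> \<phi> (h \<alpha>)"
  shows "net_lim le F 0"
  unfolding net_lim_def
proof (intro allI impI)
  fix e :: real
  assume "0 < e"
  then obtain d where "0 < d" and d: "\<And>x. 0 < x \<Longrightarrow> x < d \<Longrightarrow> \<bar>\<phi> x\<bar> < e"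
    using assms(2) by (auto simp: tendsto_iff eventually_at_right_field)
  obtain \<alpha>0 where "\<And>\<alpha>. le \<alpha>0 \<alpha> \<Longrightarrow> \<bar>h \<alpha> - 0\<bar> < d"
    using assms(1) \<open>0 < d\<close> unfolding net_lim_def by blast
  then have "\<bar>F \<alpha> - 0\<bar> < e" if "le \<alpha>0 \<alpha>" for \<alpha>
    using d[of "h \<alpha>"] assms(3) assms(4,5)[of \<alpha>] that \<open>0 < e\<close> by (cases "h \<alpha> = 0") force+
  then show "\<exists>\<alpha>0. \<forall>\<alpha>. le \<alpha>0 \<alpha> \<longrightarrow> \<bar>F \<alpha> - 0\<bar> < e"
    by blast
qed

context banach_star
begin

lemma norm_expm1_it_mult_minus_le:
  "norm (expm1_it b t * a - sc (exp (\<i> * complex_of_real t) - 1) a)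
     \<le> \<bar>t\<bar> * exp (\<bar>t\<bar> * max 1 (norm b)) * norm (b * a - a)"
proof -
  let ?z = "\<i> * complex_of_real t" and ?M = "max 1 (norm b)" and ?d = "norm (b * a - a)"
  define c where "c n = complex_of_real (1 / fact (Suc n)) * ?z ^ Suc n" for n
  have "(\<lambda>n. ((1 / fact (Suc n)) *\<^sub>R pw (sc ?z b) n) * a) sums (expm1_it b t * a)"
    unfolding expm1_it_def by (rule bounded_linear.sums[OF bounded_linear_mult_left expm1_sums])
  moreover have "((1 / fact (Suc n)) *\<^sub>R pw (sc ?z b) n) * a = sc (c n) (pw b n * a)" for n
    unfolding c_def
    by (simp only: sc_pw mult_scaleR_left sc_mult_left[symmetric] sc_of_real[symmetric] sc_mult_scalars[symmetric])
  moreover have "(\<lambda>n. sc (c n) a) sums sc (exp ?z - 1) a"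
    unfolding c_def using bounded_linear.sums[OF bounded_linear_sc_scalar exp_minus_one_sums[of ?z]]
    by (simp add: divide_inverse mult.commute del: fact_Suc)
  ultimately have sums: "(\<lambda>n. sc (c n) (pw b n * a - a)) sums (expm1_it b t * a - sc (exp ?z - 1) a)"
    using sums_diff by (fastforce simp: sc_diff)
  have bound: "norm (sc (c n) (pw b n * a - a)) \<le> \<bar>t\<bar> * ?d * ((\<bar>t\<bar> * ?M) ^ n / fact n)" for n
  proof -
    have "cmod (c n) = \<bar>t\<bar> ^ Suc n / fact (Suc n)"
      unfolding c_def norm_mult norm_of_real norm_power by (simp del: fact_Suc)
    then have "norm (sc (c n) (pw b n * a - a)) = \<bar>t\<bar> ^ Suc n / fact (Suc n) * norm (pw b n * a - a)"
      by (simp add: norm_sc)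
    also have "\<dots> \<le> \<bar>t\<bar> ^ Suc n / fact (Suc n) * (real (Suc n) * ?M ^ n * ?d)"
      by (intro mult_left_mono norm_pw_mult_minus_le) auto
    also have "\<dots> = \<bar>t\<bar> * ?d * ((\<bar>t\<bar> * ?M) ^ n / fact n)"
      by (simp add: field_simps power_mult_distrib del: fact_Suc) (simp add: algebra_simps)
    finally show ?thesis .
  qed
  have majorant: "(\<lambda>n. \<bar>t\<bar> * ?d * ((\<bar>t\<bar> * ?M) ^ n / fact n)) sums (\<bar>t\<bar> * ?d * exp (\<bar>t\<bar> * ?M))"
    using sums_mult[OF exp_converges[of "\<bar>t\<bar> * ?M"], of "\<bar>t\<bar> * ?d"]
    by (simp add: divide_inverse mult.commute)
  have "norm (expm1_it b t * a - sc (exp ?z - 1) a) = norm (\<Sum>n. sc (c n) (pw b n * a - a))"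
    by (simp add: sums_unique[OF sums])
  also have "\<dots> \<le> (\<Sum>n. \<bar>t\<bar> * ?d * ((\<bar>t\<bar> * ?M) ^ n / fact n))"
    by (rule norm_suminf_le[OF bound sums_summable[OF majorant]])
  also have "\<dots> = \<bar>t\<bar> * ?d * exp (\<bar>t\<bar> * ?M)"
    by (rule sums_unique[OF majorant, symmetric])
  finally show ?thesis
    by (simp add: mult_ac)
qed

lemma fcalc_mult_minus_has_integral:
  assumes g: "integrable lborel g" "inv_fourier g 0 = 0" "inv_fourier g 1 = 1"
    and int: "(\<lambda>t. sc (g t) (expm1_it b t)) integrable_on UNIV"
  shows "((\<lambda>t. sc (g t) (expm1_it b t * a - sc (exp (\<i> * complex_of_real t) - 1) a))
      has_integral (2 * pi) *\<^sub>R (fcalc sc g b * a - a)) UNIV"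
proof -
  let ?e = "\<lambda>t. exp (\<i> * complex_of_real t)"
  have [measurable]: "g \<in> borel_measurable lborel"
    using g(1) by (rule borel_measurable_integrable)
  have "integrable lborel (\<lambda>t. g t * ?e t)"
  proof (rule Bochner_Integration.integrable_bound[OF g(1)])
    show "(\<lambda>t. g t * ?e t) \<in> borel_measurable lborel"
      by measurable
  qed (simp add: norm_mult)
  moreover have "(LINT t|lborel. g t * ?e t) = 2 * pi" "(LINT t|lborel. g t) = 0"
    using g(2,3) by (simp_all add: inv_fourier_def field_simps)
  ultimately have "((\<lambda>t. g t * (?e t - 1)) has_integral complex_of_real (2 * pi)) UNIV"
    using has_integral_integral_lborel[of "\<lambda>t. g t * (?e t - 1)"] g(1)
    by (simp add: right_diff_distrib)
  from has_integral_linear[OF this bounded_linear_sc_scalar, of a]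
  have "((\<lambda>t. sc (g t * (?e t - 1)) a) has_integral (2 * pi) *\<^sub>R a) UNIV"
    using sc_of_real[of "2 * pi" a] by (simp add: o_def)
  with has_integral_mult_left[OF integrable_integral[OF int], of a]
  have "((\<lambda>t. sc (g t) (expm1_it b t) * a - sc (g t * (?e t - 1)) a)
      has_integral integral UNIV (\<lambda>t. sc (g t) (expm1_it b t)) * a - (2 * pi) *\<^sub>R a) UNIV"
    by (rule has_integral_diff)
  moreover have "fcalc sc g b = (1 / (2 * pi)) *\<^sub>R integral UNIV (\<lambda>t. sc (g t) (expm1_it b t))"
    by (simp add: fcalc_def expm1_A_eq_expm1 expm1_it_def)
  ultimately show ?thesis
    by (simp add: sc_mult_left sc_mult_scalars sc_diff scaleR_diff_right)
qed

lemma norm_expm1_it_mult_minus_le_min: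
  assumes "norm (expm1_it b t) \<le> w" "norm b \<le> M"
  shows "norm (expm1_it b t * a - sc (exp (\<i> * complex_of_real t) - 1) a)
    \<le> min (\<bar>t\<bar> * exp (\<bar>t\<bar> * max 1 M) * norm (b * a - a)) ((w + 2) * norm a)"
proof -
  let ?e = "exp (\<i> * complex_of_real t)"
  have "exp (\<bar>t\<bar> * max 1 (norm b)) \<le> exp (\<bar>t\<bar> * max 1 M)"
    using assms(2) by (intro exp_mono mult_left_mono max.mono) auto
  then have "norm (expm1_it b t * a - sc (?e - 1) a) \<le> \<bar>t\<bar> * exp (\<bar>t\<bar> * max 1 M) * norm (b * a - a)"
    using norm_expm1_it_mult_minus_le[of b t a]
    by (smt (verit) mult_left_mono mult_right_mono abs_ge_zero norm_ge_zero)
  moreover have "norm (sc (?e - 1) a) \<le> 2 * norm a"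
    using norm_triangle_ineq4[of ?e 1] by (simp add: norm_sc mult_right_mono)
  moreover have "norm (expm1_it b t * a) \<le> w * norm a"
    by (rule order_trans[OF norm_mult_ineq mult_right_mono[OF assms(1)]]) simp
  ultimately show ?thesis
    using norm_triangle_ineq4[of "expm1_it b t * a" "sc (?e - 1) a"] by (simp add: algebra_simps)
qed

lemma norm_fcalc_mult_minus_le:
  assumes g: "integrable lborel g" "inv_fourier g 0 = 0" "inv_fourier g 1 = 1"
    and \<omega>: "\<And>t. norm (expm1_it b t) \<le> \<omega> t" "integrable lborel (\<lambda>t. cmod (g t) * \<omega> t)"
    and "norm b \<le> M"
  shows "norm (fcalc sc g b * a - a) \<le> (LINT t|lborel.
      min (norm (b * a - a) * (cmod (g t) * \<bar>t\<bar> * exp (\<bar>t\<bar> * max 1 M))) (cmod (g t) * (\<omega> t + 2) * norm a))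
      / (2 * pi)"
proof -
  let ?\<delta> = "norm (b * a - a)"
  let ?U = "\<lambda>t. cmod (g t) * \<bar>t\<bar> * exp (\<bar>t\<bar> * max 1 M)" and ?V = "\<lambda>t. cmod (g t) * (\<omega> t + 2) * norm a"
  have [measurable]: "g \<in> borel_measurable lborel"
    using g(1) by (rule borel_measurable_integrable)
  have "?U \<in> borel_measurable lborel"
    by measurable
  moreover have "integrable lborel ?V"
    using \<omega>(2) g(1) by (simp add: distrib_left distrib_right)
  moreover have "0 \<le> \<omega> t" for t
    using \<omega>(1)[of t] norm_ge_zero order_trans by blast
  ultimately have "integrable lborel (\<lambda>t. min (?\<delta> * ?U t) (?V t))"
    by (intro integrable_min_scaled) auto
  moreover have "norm (sc (g t) (expm1_it b t * a - sc (exp (\<i> * complex_of_real t) - 1) a))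
      \<le> min (?\<delta> * ?U t) (?V t)" for t
    using mult_left_mono[OF norm_expm1_it_mult_minus_le_min[OF \<omega>(1) \<open>norm b \<le> M\<close>] norm_ge_zero[of "g t"]]
    by (simp add: norm_sc min_mult_distrib_left mult_ac)
  ultimately have "norm ((2 * pi) *\<^sub>R (fcalc sc g b * a - a)) \<le> (LINT t|lborel. min (?\<delta> * ?U t) (?V t))"
    using fcalc_mult_minus_has_integral[OF g integrable_on_UNIV_sc_expm1_it[OF g(1) \<omega>]]
    by (metis (no_types, lifting) integral_unique has_integral_integrable integral_norm_bound_integral
        integrable_on_lborel integral_lborel)
  then have "2 * pi * norm (fcalc sc g b * a - a) \<le> (LINT t|lborel. min (?\<delta> * ?U t) (?V t))"
    by simp
  then show ?thesis
    by (simp add: pos_le_divide_eq mult.commute)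
qed

lemma net_lim_fcalc_mult_minus:
  assumes g: "integrable lborel g" "inv_fourier g 0 = 0" "inv_fourier g 1 = 1"
    and \<omega>: "\<And>\<alpha> t. norm (expm1_it (b \<alpha>) t) \<le> \<omega> t" "integrable lborel (\<lambda>t. cmod (g t) * \<omega> t)"
    and M: "\<And>\<alpha>. norm (b \<alpha>) \<le> M"
    and approx: "net_lim le (\<lambda>\<alpha>. norm (b \<alpha> * a - a)) 0"
  shows "net_lim le (\<lambda>\<alpha>. norm (fcalc sc g (b \<alpha>) * a - a)) 0"
proof -
  let ?U = "\<lambda>t. cmod (g t) * \<bar>t\<bar> * exp (\<bar>t\<bar> * max 1 M)" and ?V = "\<lambda>t. cmod (g t) * (\<omega> t + 2) * norm a"
  define \<Psi> where "\<Psi> \<delta> = (LINT t|lborel. min (\<delta> * ?U t) (?V t)) / (2 * pi)" for \<delta>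
  have [measurable]: "g \<in> borel_measurable lborel"
    using g(1) by (rule borel_measurable_integrable)
  have "0 \<le> \<omega> t" for t
    using \<omega>(1)[of undefined t] norm_ge_zero order_trans by blast
  then have V_nonneg: "0 \<le> ?V t" for t
    by simp
  have "?U \<in> borel_measurable lborel"
    by measurable
  moreover have "integrable lborel ?V"
    using \<omega>(2) g(1) by (simp add: distrib_left distrib_right)
  ultimately have "((\<lambda>\<delta>. LINT t|lborel. min (\<delta> * ?U t) (?V t)) \<longlongrightarrow> 0) (at_right 0)"
    using V_nonneg by (intro tendsto_integral_min_scaled) simp_all
  then have "(\<Psi> \<longlongrightarrow> 0) (at_right 0)"
    unfolding \<Psi>_def by (rule tendsto_divide_zero)
  moreover have "\<Psi> 0 = 0"
    using V_nonneg by (simp add: \<Psi>_def min_absorb1)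
  moreover have "norm (fcalc sc g (b \<alpha>) * a - a) \<le> \<Psi> (norm (b \<alpha> * a - a))" for \<alpha>
    unfolding \<Psi>_def by (rule norm_fcalc_mult_minus_le[OF g \<omega>(1) \<omega>(2) M])
  ultimately show ?thesis
    using net_lim_zero_by_bound[where \<phi> = \<Psi> and h = "\<lambda>\<alpha>. norm (b \<alpha> * a - a)", OF approx] by simp
qed

end

theorem lemma3p21:
  fixes scA :: "complex \<Rightarrow> 'a::{banach,real_normed_algebra} \<Rightarrow> 'a" and stA :: "'a \<Rightarrow> 'a"
    and scB :: "complex \<Rightarrow> 'b::{banach,real_normed_algebra} \<Rightarrow> 'b" and stB :: "'b \<Rightarrow> 'b"
    and \<iota> :: "'a \<Rightarrow> 'b"
    and k :: nat and p q \<tau> :: real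
    and g f :: "real \<Rightarrow> complex"
    and le :: "'i \<Rightarrow> 'i \<Rightarrow> bool" and b :: "'i \<Rightarrow> 'a"
  assumes "kpq_differential_subalgebra k p q scA stA scB stB \<iota>"
    and "log (real k) (max (real k - 1) p) < \<tau>" and "\<tau> < 1"
    and "D_tau \<tau> g" and "f = inv_fourier g" and "f 0 = 0" and "f 1 = 1"
    and "bounded_approx_identity le b" and "\<forall>\<alpha>. stA (b \<alpha>) = b \<alpha>"
  shows "\<forall>a. net_lim le (\<lambda>\<alpha>. norm (fcalc scA g (b \<alpha>) * a - a)) 0"
proof
  fix a :: 'a
  obtain C where "0 < C" "\<forall>a. norm (pw a (k - 1)) \<le> C * norm a powr p * norm (\<iota> a) powr q"
    using assms(1) unfolding kpq_differential_subalgebra_def by blast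
  then interpret differential_subalgebra scA stA scB stB \<iota> k p q C
    using assms(1) unfolding kpq_differential_subalgebra_def by unfold_locales auto
  obtain M where M: "\<And>\<alpha>. norm (b \<alpha>) \<le> M"
    using assms(8) unfolding bounded_approx_identity_def by blast
  obtain K where K: "\<And>c t. stA c = c \<Longrightarrow> norm c \<le> M \<Longrightarrow> norm (expm1_it c t) \<le> K * exp (\<bar>t\<bar> powr \<tau>)"
    using norm_expm1_it_subexponential[OF assms(2)] by blast
  show "net_lim le (\<lambda>\<alpha>. norm (fcalc scA g (b \<alpha>) * a - a)) 0"
  proof (rule net_lim_fcalc_mult_minus[where \<omega> = "\<lambda>t. K * exp (\<bar>t\<bar> powr \<tau>)", OF _ _ _ _ _ M])
    show "integrable lborel g" "integrable lborel (\<lambda>t. cmod (g t) * (K * exp (\<bar>t\<bar> powr \<tau>)))"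
      using assms(4) by (simp_all add: D_tau_def mult.left_commute)
    show "inv_fourier g 0 = 0" "inv_fourier g 1 = 1"
      using assms(5-7) by simp_all
    show "net_lim le (\<lambda>\<alpha>. norm (b \<alpha> * a - a)) 0"
      using assms(8) unfolding bounded_approx_identity_def by blast
    show "norm (expm1_it (b \<alpha>) t) \<le> K * exp (\<bar>t\<bar> powr \<tau>)" for \<alpha> t
      using K[OF _ M] assms(9) by simp
  qed
qed

end
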